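(* There exist, for every (sufficiently large) $n$, positive real weights $w_n\ge\dots\ge w_1>0$ and a bound $B\in\{1,\dots,n\}$ such that RLS (defined in the context), started from a uniformly random initial search point in $\{0,1\}^n$ and minimising the penalised fitness \[ f(x)=\sum_{i=1}^n w_i x_i+\max\{0,\,B-b(x)\}\cdot(n w_n+1),\qquad b(x)=\sum_{i=1}^n x_i , \] has expected optimisation time $\Omega(n^2)$.
   Context: Problem: minimise $f_{\mathrm{obj}}(x)=\sum_{i=1}^n w_ix_i$ over $x\in\{0,1\}^n$ subject to the uniform constraint $x_1+\dots+x_n\ge B$. A search point is optimal if it satisfies the constraint and minimises $f_{\mathrm{obj}}$ among all points satisfying the constraint. RLS: maintain a current search point $x_t$ ($x_0$ uniform on $\{0,1\}^n$); in each iteration choose $b\in\{1,2\}$ uniformly at random, create $x'$ by flipping $b$ distinct bits of $x_t$ chosen uniformly at random; set $x_{t+1}=x'$ if $f(x')\le f(x_t)$, otherwise $x_{t+1}=x_t$. The optimisation time is the number of iterations until an optimal search point has been sampled for the first time. *)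

theory Defs
  imports "HOL-Probability.Probability"
begin

text \<open>Search points in {0,1}^n are represented by the set of positions (from {1..n})
  whose bit is 1. Weights are indexed 1..n.\<close>

definition search_space :: "nat \<Rightarrow> nat set set" where
  "search_space n = Pow {1..n}"

definition f_obj :: "(nat \<Rightarrow> real) \<Rightarrow> nat set \<Rightarrow> real" where
  "f_obj w x = (\<Sum>i\<in>x. w i)"

definition f_pen :: "nat \<Rightarrow> (nat \<Rightarrow> real) \<Rightarrow> nat \<Rightarrow> nat set \<Rightarrow> real" where
  "f_pen n w B x = f_obj w x + max 0 (real B - real (card x)) * (real n * w n + 1)"

definition optimal :: "nat \<Rightarrow> (nat \<Rightarrow> real) \<Rightarrow> nat \<Rightarrow> nat set \<Rightarrow> bool" where
  "optimal n w B x \<longleftrightarrow> x \<in> search_space n \<and> card x \<ge> B \<and>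
     (\<forall>y\<in>search_space n. card y \<ge> B \<longrightarrow> f_obj w x \<le> f_obj w y)"

definition rls_step :: "nat \<Rightarrow> (nat set \<Rightarrow> real) \<Rightarrow> nat set \<Rightarrow> nat set pmf" where
  "rls_step n f x = do {
     b \<leftarrow> pmf_of_set {1::nat, 2};
     S \<leftarrow> pmf_of_set {S. S \<subseteq> {1..n} \<and> card S = b};
     let y = x \<union> S - (x \<inter> S);
     return_pmf (if f y \<le> f x then y else x)
   }"

text \<open>Process stopped at the first optimal search point: None means an optimal point
  has already been sampled (at some time \<le> t), Some x means x_t = x and none of
  x_0,...,x_t is optimal.\<close>
definition mark :: "(nat set \<Rightarrow> bool) \<Rightarrow> nat set \<Rightarrow> nat set option" where
  "mark opt x = (if opt x then None else Some x)"

fun rls_stopped :: "nat \<Rightarrow> (nat set \<Rightarrow> real) \<Rightarrow> (nat set \<Rightarrow> bool) \<Rightarrow> nat \<Rightarrow> nat set option pmf" where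
  "rls_stopped n f opt 0 = map_pmf (mark opt) (pmf_of_set (search_space n))"
| "rls_stopped n f opt (Suc t) = rls_stopped n f opt t \<bind>
     (\<lambda>s. case s of None \<Rightarrow> return_pmf None
                  | Some x \<Rightarrow> map_pmf (mark opt) (rls_step n f x))"

text \<open>Expected optimisation time E[T] = sum_{t \<ge> 0} Pr[T > t], where T is the first t
  with x_t optimal (possibly infinite).\<close>
definition rls_expected_time :: "nat \<Rightarrow> (nat set \<Rightarrow> real) \<Rightarrow> (nat set \<Rightarrow> bool) \<Rightarrow> ennreal" where
  "rls_expected_time n f opt =
     (\<Sum>t. ennreal (measure_pmf.prob (rls_stopped n f opt t) (range Some)))"

end

theory Submission
  imports Defs
begin

text \<open>
  Take w_1 = 1, w_i = 2 for i \<ge> 2, and B = 1, so that {1} is the unique optimum and the empty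
  set carries a large penalty. From a search point x with 1 \<notin> x, an accepted move that sets
  bit 1 cannot increase the number of ones, so it is the 2-bit flip exchanging bit 1 with a
  one-bit of x, which has probability |x| / (2 (n choose 2)). On such points the potential
  (n - |x|)^2 is at most n^2, and its expected decrease per step is at most 1: the rare exchange
  is compensated by the accepted single-bit removals, each raising it by 2 (n - |x|) + 1. Its
  expectation under the uniform initial distribution is at least n^2/16.

  For a potential bounded by H whose expected decrease is at most 1, the expected potential of
  the process stopped at the first optimum decreases by at most Pr[T > t] in step t, and what is
  left at time H is at most H Pr[T > H] \<le> \<Sum>_{t<H} Pr[T > t]. Hence E[T] is at least half
  the initial expected potential, here n^2/32.
\<close>

section \<open>Additive drift lower bound for RLS\<close>

lemma nn_integral_eq_expectation_bounded:
  fixes M :: "'a pmf" and g :: "'a \<Rightarrow> real"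
  assumes "\<And>x. 0 \<le> g x" "\<And>x. g x \<le> c"
  shows "(\<integral>\<^sup>+ y. ennreal (g y) \<partial>M) = ennreal (measure_pmf.expectation M g)"
  by (rule nn_integral_eq_integral)
    (auto intro: measure_pmf.integrable_const_bound[where B = c] simp: assms)

locale rls_potential =
  fixes n :: nat and f :: "nat set \<Rightarrow> real" and opt :: "nat set \<Rightarrow> bool"
    and h :: "nat set \<Rightarrow> real" and H :: nat
  assumes potential_nonneg: "0 \<le> h x"
    and potential_le: "h x \<le> real H"
    and potential_opt: "opt x \<Longrightarrow> h x = 0"
    and potential_drift: "\<not> opt x \<Longrightarrow> h x \<le> measure_pmf.expectation (rls_step n f x) h + 1"
begin

definition survival :: "nat \<Rightarrow> ennreal" where
  "survival t = emeasure (measure_pmf (rls_stopped n f opt t)) (range Some)"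

definition stopped_potential :: "nat \<Rightarrow> ennreal" where
  "stopped_potential t = (\<integral>\<^sup>+ s. case_option 0 (\<lambda>x. ennreal (h x)) s \<partial>rls_stopped n f opt t)"

lemma nn_integral_potential:
  "(\<integral>\<^sup>+ y. ennreal (h y) \<partial>measure_pmf M) = ennreal (measure_pmf.expectation M h)"
  using nn_integral_eq_expectation_bounded potential_nonneg potential_le .

lemma potential_mark: "case_option 0 (\<lambda>x. ennreal (h x)) (mark opt y) = ennreal (h y)"
  by (simp add: mark_def potential_opt)

lemma survival_eq_nn_integral:
  "survival t = (\<integral>\<^sup>+ s. indicator (range Some) s \<partial>rls_stopped n f opt t)"
  by (simp add: survival_def)

lemma survival_Suc_le: "survival (Suc t) \<le> survival t"
proof -
  have "survival (Suc t) =
      (\<integral>\<^sup>+ s. emeasure (case s of None \<Rightarrow> return_pmf None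
          | Some x \<Rightarrow> map_pmf (mark opt) (rls_step n f x)) (range Some) \<partial>rls_stopped n f opt t)"
    by (simp add: survival_def)
  also have "\<dots> \<le> (\<integral>\<^sup>+ s. indicator (range Some) s \<partial>rls_stopped n f opt t)"
    by (intro nn_integral_mono) (auto split: option.split simp: measure_pmf.emeasure_le_1)
  finally show ?thesis
    by (simp add: survival_eq_nn_integral)
qed

lemma stopped_potential_le_survival: "stopped_potential t \<le> of_nat H * survival t"
proof -
  have "stopped_potential t \<le> (\<integral>\<^sup>+ s. of_nat H * indicator (range Some) s \<partial>rls_stopped n f opt t)"
    unfolding stopped_potential_def
    by (intro nn_integral_mono)
      (auto split: option.split simp: potential_le ennreal_of_nat_eq_real_of_nat ennreal_leI)
  also have "\<dots> = of_nat H * survival t"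
    by (simp add: survival_eq_nn_integral nn_integral_cmult)
  finally show ?thesis .
qed

lemma stopped_potential_le_Suc: "stopped_potential t \<le> stopped_potential (Suc t) + survival t"
proof -
  define K where "K s = (case s of None \<Rightarrow> return_pmf None
      | Some x \<Rightarrow> map_pmf (mark opt) (rls_step n f x))" for s
  have step: "case_option 0 (\<lambda>x. ennreal (h x)) s
      \<le> (\<integral>\<^sup>+ y. case_option 0 (\<lambda>x. ennreal (h x)) y \<partial>K s) + indicator (range Some) s" for s
  proof (cases s)
    case (Some x)
    show ?thesis
    proof (cases "opt x")
      case False
      then have "ennreal (h x) \<le> ennreal (measure_pmf.expectation (rls_step n f x) h + 1)"
        by (intro ennreal_leI potential_drift)
      then show ?thesis
        using Some by (simp add: K_def potential_mark nn_integral_potential ennreal_plus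
            potential_nonneg integral_nonneg_AE)
    qed (simp add: Some potential_opt)
  qed simp
  have "stopped_potential t \<le> (\<integral>\<^sup>+ s. (\<integral>\<^sup>+ y. case_option 0 (\<lambda>x. ennreal (h x)) y \<partial>K s)
      + indicator (range Some) s \<partial>rls_stopped n f opt t)"
    unfolding stopped_potential_def by (intro nn_integral_mono step)
  also have "\<dots> = stopped_potential (Suc t) + survival t"
    by (simp add: nn_integral_add stopped_potential_def survival_eq_nn_integral K_def)
  finally show ?thesis .
qed

lemma stopped_potential_0_le:
  "stopped_potential 0 \<le> stopped_potential N + (\<Sum>t<N. survival t)"
proof (induction N)
  case (Suc N)
  have "stopped_potential 0 \<le> stopped_potential N + (\<Sum>t<N. survival t)"
    by (fact Suc.IH)
  also have "\<dots> \<le> (stopped_potential (Suc N) + survival N) + (\<Sum>t<N. survival t)"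
    by (intro add_right_mono stopped_potential_le_Suc)
  also have "\<dots> = stopped_potential (Suc N) + (\<Sum>t<Suc N. survival t)"
    by (simp add: ac_simps)
  finally show ?case .
qed simp

lemma stopped_potential_0:
  "stopped_potential 0 = ennreal (measure_pmf.expectation (pmf_of_set (search_space n)) h)"
  by (simp add: stopped_potential_def potential_mark nn_integral_potential)

lemma expected_time_eq_suminf_survival: "rls_expected_time n f opt = (\<Sum>t. survival t)"
  by (simp add: rls_expected_time_def survival_def measure_pmf.emeasure_eq_measure)

lemma expectation_initial_le_expected_time:
  "ennreal (measure_pmf.expectation (pmf_of_set (search_space n)) h / 2) \<le> rls_expected_time n f opt"
proof -
  have "2 * ennreal (measure_pmf.expectation (pmf_of_set (search_space n)) h / 2) = stopped_potential 0"
    using ennreal_mult'[of 2 "measure_pmf.expectation (pmf_of_set (search_space n)) h / 2"]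
    by (simp add: stopped_potential_0)
  also have "\<dots> \<le> stopped_potential H + (\<Sum>t<H. survival t)"
    by (rule stopped_potential_0_le)
  also have "\<dots> \<le> of_nat H * survival H + (\<Sum>t<H. survival t)"
    by (intro add_right_mono stopped_potential_le_survival)
  also have "of_nat H * survival H \<le> (\<Sum>t<H. survival t)"
    using sum_mono[of "{..<H}" "\<lambda>_. survival H" survival]
      lift_Suc_antimono_le[of survival, OF survival_Suc_le]
    by simp
  also have "(\<Sum>t<H. survival t) + (\<Sum>t<H. survival t) \<le> 2 * (\<Sum>t. survival t)"
    unfolding mult_2 by (intro add_mono sum_le_suminf) auto
  finally show ?thesis
    by (simp add: ennreal_mult_le_mult_iff expected_time_eq_suminf_survival)
qed

end

section \<open>One RLS step as an average over flip sets\<close>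

definition rls_move :: "(nat set \<Rightarrow> real) \<Rightarrow> nat set \<Rightarrow> nat set \<Rightarrow> nat set" where
  "rls_move f x S = (let y = x \<union> S - (x \<inter> S) in if f y \<le> f x then y else x)"

definition flip_sets :: "nat \<Rightarrow> nat \<Rightarrow> nat set set" where
  "flip_sets n b = {S. S \<subseteq> {1..n} \<and> card S = b}"

lemma finite_flip_sets: "finite (flip_sets n b)"
  unfolding flip_sets_def by (rule finite_subset[of _ "Pow {1..n}"]) auto

lemma card_flip_sets: "card (flip_sets n b) = n choose b"
  unfolding flip_sets_def using n_subsets[of "{1..n}" b] by simp

lemma flip_sets_nonempty: "b \<le> n \<Longrightarrow> flip_sets n b \<noteq> {}"
  unfolding flip_sets_def by (auto intro!: exI[of _ "{1..b}"])

lemma flip_sets_1: "flip_sets n 1 = (\<lambda>j. {j}) ` {1..n}"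
  unfolding flip_sets_def by (auto simp: card_1_singleton_iff)

lemma real_choose_2: "real (n choose 2) = real n * (real n - 1) / 2"
  by (induction n) (simp_all add: numeral_2_eq_2 field_simps)

lemma expectation_rls_step:
  assumes "n \<ge> 2"
  shows "measure_pmf.expectation (rls_step n f x) g =
    ((\<Sum>S\<in>flip_sets n 1. g (rls_move f x S)) / real n
      + (\<Sum>S\<in>flip_sets n 2. g (rls_move f x S)) / real (n choose 2)) / 2"
proof -
  have "rls_step n f x = map_pmf (rls_move f x) (pmf_of_set {1, 2} \<bind> (\<lambda>b. pmf_of_set (flip_sets n b)))"
    unfolding rls_step_def rls_move_def flip_sets_def map_pmf_def
    by (simp add: bind_assoc_pmf bind_return_pmf Let_def)
  also have "measure_pmf.expectation \<dots> g =
      (\<Sum>b\<in>{1, 2}. measure_pmf.expectation (pmf_of_set (flip_sets n b)) (\<lambda>S. g (rls_move f x S)) /\<^sub>R real (card {1::nat, 2}))"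
    using assms
    by (simp only: integral_map_pmf)
      (rule pmf_expectation_bind_pmf_of_set, auto simp: finite_flip_sets flip_sets_nonempty)
  also have "\<dots> = ((\<Sum>S\<in>flip_sets n 1. g (rls_move f x S)) / real n
      + (\<Sum>S\<in>flip_sets n 2. g (rls_move f x S)) / real (n choose 2)) / 2"
    using assms
    by (simp add: integral_pmf_of_set finite_flip_sets flip_sets_nonempty card_flip_sets add_divide_distrib)
  finally show ?thesis .
qed

section \<open>The trap: B = 1, w_1 = 1 and w_i = 2 otherwise\<close>

definition trap_weights :: "nat \<Rightarrow> real" where
  "trap_weights i = (if i = 1 then 1 else 2)"

definition trap_potential :: "nat \<Rightarrow> nat set \<Rightarrow> real" where
  "trap_potential n x =
     (if x \<subseteq> {1..n} \<and> 1 \<notin> x \<and> x \<noteq> {} then real ((n - card x)\<^sup>2) else 0)"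

lemma f_obj_trap_weights:
  assumes "finite z"
  shows "f_obj trap_weights z = 2 * real (card z) - (if 1 \<in> z then 1 else 0)"
proof -
  have "f_obj trap_weights z = (\<Sum>i\<in>z. 2 - (if i = 1 then 1 else 0))"
    unfolding f_obj_def trap_weights_def by (intro sum.cong) auto
  then show ?thesis
    using assms by (simp add: sum_subtractf)
qed

lemma f_pen_trap_weights:
  assumes "n \<ge> 2" "finite z"
  shows "f_pen n trap_weights 1 z =
    2 * real (card z) - (if 1 \<in> z then 1 else 0) + (if z = {} then 2 * real n + 1 else 0)"
proof -
  have "max 0 (1 - real (card z)) = (if z = {} then 1 else 0)"
    using assms by (cases "z = {}") (auto simp: card_gt_0_iff Suc_le_eq)
  then show ?thesis
    using assms by (simp add: f_pen_def f_obj_trap_weights trap_weights_def)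
qed

lemma optimal_trap_weights_imp_1_in:
  assumes "n \<ge> 1" "optimal n trap_weights 1 x"
  shows "1 \<in> x"
proof (rule ccontr)
  assume "1 \<notin> x"
  have x: "x \<subseteq> {1..n}" "card x \<ge> 1"
    and min: "\<And>y. y \<subseteq> {1..n} \<Longrightarrow> card y \<ge> 1 \<Longrightarrow> f_obj trap_weights x \<le> f_obj trap_weights y"
    using assms(2) by (auto simp: optimal_def search_space_def)
  have "finite x"
    using x(1) finite_subset by blast
  then obtain j where "j \<in> x"
    using x(2) by fastforce
  define y where "y = insert 1 (x - {j})"
  have "card y = card x"
    using \<open>j \<in> x\<close> \<open>1 \<notin> x\<close> \<open>finite x\<close> x(2) by (simp add: y_def)
  moreover have "y \<subseteq> {1..n}"
    using x(1) assms(1) by (auto simp: y_def)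
  ultimately have "f_obj trap_weights x \<le> f_obj trap_weights y"
    using min x(2) by simp
  then show False
    using \<open>card y = card x\<close> \<open>1 \<notin> x\<close> \<open>finite x\<close>
    by (simp add: f_obj_trap_weights y_def)
qed

lemma trap_potential_optimal:
  assumes "n \<ge> 1" "optimal n trap_weights 1 x"
  shows "trap_potential n x = 0"
  using optimal_trap_weights_imp_1_in[OF assms] by (simp add: trap_potential_def)

lemma trap_potential_nonneg: "0 \<le> trap_potential n x"
  by (simp add: trap_potential_def)

lemma trap_potential_le: "trap_potential n x \<le> real (n\<^sup>2)"
  unfolding trap_potential_def of_nat_le_iff by (auto intro: power_mono)

lemma trap_loss_le_gain:
  fixes n k :: nat
  assumes "2 \<le> n" "1 \<le> k" "k \<le> n"
  shows "real k * real ((n - k)\<^sup>2) / real (n choose 2)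
    \<le> 2 + real k * (if k \<ge> 2 then 2 * real (n - k) + 1 else 0) / real n"
proof (cases "k = 1")
  case True
  have "real ((n - 1)\<^sup>2) = (real n - 1) * (real n - 1)"
    using assms(1) by (simp add: of_nat_diff power2_eq_square)
  then show ?thesis
    using True assms(1) by (simp add: real_choose_2 field_simps)
next
  case False
  define a where "a = real (n - k)"
  have a: "0 \<le> a" "a \<le> real n - 1"
    using assms by (auto simp: a_def of_nat_diff)
  have "real n - 1 > 0"
    using assms(1) by simp
  then have "real k * (a * a) / (real n * (real n - 1) / 2)
      \<le> real k * (a * (real n - 1)) / (real n * (real n - 1) / 2)"
    by (intro divide_right_mono mult_left_mono) (use a in simp_all)
  also have "\<dots> = real k * (2 * a) / real n"
    using \<open>real n - 1 > 0\<close> by (simp add: field_simps)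
  also have "\<dots> \<le> real k * (2 * a + 1) / real n"
    by (intro divide_right_mono mult_left_mono) simp_all
  finally show ?thesis
    using False assms(2) by (simp add: a_def power2_eq_square real_choose_2)
qed

locale trap_point =
  fixes n :: nat and x :: "nat set"
  assumes n_ge_2: "n \<ge> 2" and x_subset: "x \<subseteq> {1..n}"
    and one_notin_x: "1 \<notin> x" and x_nonempty: "x \<noteq> {}"
begin

abbreviation F :: "nat set \<Rightarrow> real" where
  "F \<equiv> f_pen n trap_weights 1"

lemma finite_x: "finite x"
  using x_subset finite_subset by blast

lemma card_x_ge_1: "card x \<ge> 1"
  using finite_x x_nonempty by (simp add: Suc_le_eq card_gt_0_iff)

lemma card_x_le: "card x \<le> n"
  using card_mono[OF _ x_subset] by simp

lemma F_x: "F x = 2 * real (card x)"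
  using f_pen_trap_weights[OF n_ge_2 finite_x] one_notin_x x_nonempty by simp

lemma trap_potential_x: "trap_potential n x = real ((n - card x)\<^sup>2)"
  using x_subset one_notin_x x_nonempty by (simp add: trap_potential_def)

lemma trap_potential_move_ge:
  assumes S: "S \<subseteq> {1..n}" and no_swap: "1 \<notin> S \<or> S \<inter> x = {}"
  shows "trap_potential n (rls_move F x S) \<ge> real ((n - card x)\<^sup>2)"
proof -
  define y where "y = x \<union> S - (x \<inter> S)"
  show ?thesis
  proof (cases "F y \<le> F x")
    case True
    then have move: "rls_move F x S = y" and accept: "F y \<le> F x"
      by (simp_all add: rls_move_def y_def)
    have "finite S"
      using S finite_subset by blast
    then have "finite y"
      using finite_x by (simp add: y_def)
    note F_y = f_pen_trap_weights[OF n_ge_2 \<open>finite y\<close>]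
    have "y \<noteq> {}"
      using accept F_x F_y card_x_le by auto
    have "1 \<notin> y"
    proof
      assume "1 \<in> y"
      then have "1 \<in> S" "S \<inter> x = {}"
        using one_notin_x no_swap by (auto simp: y_def)
      then have "card y = card x + card S" and "card S \<ge> 1"
        using finite_x \<open>finite S\<close> by (auto simp: y_def card_Un_disjoint Int_commute Suc_le_eq card_gt_0_iff)
      then show False
        using accept F_x F_y \<open>1 \<in> y\<close> \<open>y \<noteq> {}\<close> by simp
    qed
    then have "card y \<le> card x"
      using accept F_x F_y \<open>y \<noteq> {}\<close> by simp
    moreover have "y \<subseteq> {1..n}"
      using S x_subset by (auto simp: y_def)
    ultimately show ?thesis
      using move \<open>1 \<notin> y\<close> \<open>y \<noteq> {}\<close> by (simp add: trap_potential_def power_mono)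
  next
    case False
    then show ?thesis
      by (simp add: rls_move_def y_def trap_potential_x)
  qed
qed

lemma rls_move_remove:
  assumes "j \<in> x" "card x \<ge> 2"
  shows "rls_move F x {j} = x - {j}"
proof -
  have "card (x - {j}) = card x - 1"
    using assms finite_x by simp
  then have "x - {j} \<noteq> {}"
    using assms(2) card_gt_0_iff[of "x - {j}"] by linarith
  then have "F (x - {j}) \<le> F x"
    using f_pen_trap_weights[OF n_ge_2, of "x - {j}"] F_x finite_x one_notin_x
      \<open>card (x - {j}) = card x - 1\<close> assms(2) by (simp add: of_nat_diff)
  moreover have "x \<union> {j} - (x \<inter> {j}) = x - {j}"
    using assms(1) by auto
  ultimately show ?thesis
    by (simp add: rls_move_def)
qed

lemma sum_singleton_moves_ge:
  defines "D \<equiv> if card x \<ge> 2 then 2 * real (n - card x) + 1 else 0"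
  shows "(\<Sum>S\<in>flip_sets n 1. trap_potential n (rls_move F x S))
    \<ge> real n * real ((n - card x)\<^sup>2) + real (card x) * D"
proof -
  define G where "G = real ((n - card x)\<^sup>2)"
  have pointwise: "G + (if j \<in> x then D else 0) \<le> trap_potential n (rls_move F x {j})"
    if "j \<in> {1..n}" for j
  proof (cases "j \<in> x \<and> card x \<ge> 2")
    case True
    then have "x - {j} \<noteq> {}" "card (x - {j}) = card x - 1"
      using finite_x card_x_ge_1 by (auto simp: subset_singleton_iff)
    moreover have "n - (card x - 1) = (n - card x) + 1"
      using card_x_ge_1 card_x_le by simp
    ultimately have "trap_potential n (x - {j}) = G + D"
      using True x_subset one_notin_x
      by (auto simp: trap_potential_def G_def D_def power2_eq_square algebra_simps)
    then show ?thesis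
      using True rls_move_remove[of j] by simp
  next
    case False
    then have "G \<le> trap_potential n (rls_move F x {j})"
      using that one_notin_x unfolding G_def by (intro trap_potential_move_ge) auto
    then show ?thesis
      using False by (auto simp: D_def)
  qed
  have "real n * G + real (card x) * D = (\<Sum>j\<in>{1..n}. G + (if j \<in> x then D else 0))"
    using x_subset by (simp add: sum.distrib sum.If_cases Int_absorb1)
  also have "\<dots> \<le> (\<Sum>j\<in>{1..n}. trap_potential n (rls_move F x {j}))"
    by (rule sum_mono) (rule pointwise)
  also have "\<dots> = (\<Sum>S\<in>flip_sets n 1. trap_potential n (rls_move F x S))"
    unfolding flip_sets_1 by (simp add: sum.reindex)
  finally show ?thesis
    by (simp add: G_def)
qed

lemma sum_pair_moves_ge:
  "(\<Sum>S\<in>flip_sets n 2. trap_potential n (rls_move F x S))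
    \<ge> (real (n choose 2) - real (card x)) * real ((n - card x)\<^sup>2)"
proof -
  define G where "G = real ((n - card x)\<^sup>2)"
  define swaps where "swaps = (\<lambda>j. {1, j}) ` x"
  have pointwise: "G - (if S \<in> swaps then G else 0) \<le> trap_potential n (rls_move F x S)"
    if "S \<in> flip_sets n 2" for S
  proof (cases "S \<in> swaps")
    case False
    have S: "S \<subseteq> {1..n}" "card S = 2"
      using that by (auto simp: flip_sets_def)
    have "1 \<notin> S \<or> S \<inter> x = {}"
    proof (rule ccontr)
      assume "\<not> (1 \<notin> S \<or> S \<inter> x = {})"
      then obtain j where "1 \<in> S" "j \<in> S" "j \<in> x"
        by blast
      then have "{1, j} = S"
        using S one_notin_x finite_subset[OF S(1)]
        by (intro card_seteq) (auto simp: card_insert_if)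
      then show False
        using False \<open>j \<in> x\<close> by (auto simp: swaps_def)
    qed
    with S(1) have "G \<le> trap_potential n (rls_move F x S)"
      unfolding G_def by (rule trap_potential_move_ge)
    then show ?thesis
      using False by simp
  qed (simp add: trap_potential_nonneg)
  have "swaps \<subseteq> flip_sets n 2"
    using x_subset one_notin_x n_ge_2 by (auto simp: swaps_def flip_sets_def card_insert_if)
  moreover have "card swaps = card x"
    unfolding swaps_def using one_notin_x
    by (intro card_image inj_onI) (auto simp: doubleton_eq_iff)
  ultimately have "(real (n choose 2) - real (card x)) * G
      = (\<Sum>S\<in>flip_sets n 2. G - (if S \<in> swaps then G else 0))"
    by (simp add: sum_subtractf sum.If_cases finite_flip_sets card_flip_sets Int_absorb1
        left_diff_distrib)
  also have "\<dots> \<le> (\<Sum>S\<in>flip_sets n 2. trap_potential n (rls_move F x S))"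
    by (rule sum_mono) (rule pointwise)
  finally show ?thesis
    by (simp add: G_def)
qed

lemma trap_potential_drift_point:
  "trap_potential n x \<le> measure_pmf.expectation (rls_step n F x) (trap_potential n) + 1"
proof -
  define k where "k = card x"
  define G where "G = real ((n - k)\<^sup>2)"
  define D where "D = (if k \<ge> 2 then 2 * real (n - k) + 1 else 0)"
  define C where "C = real (n choose 2)"
  define S1 where "S1 = (\<Sum>S\<in>flip_sets n 1. trap_potential n (rls_move F x S))"
  define S2 where "S2 = (\<Sum>S\<in>flip_sets n 2. trap_potential n (rls_move F x S))"
  define A1 where "A1 = S1 / real n"
  define A2 where "A2 = S2 / C"
  define gain where "gain = real k * D / real n"
  define loss where "loss = real k * G / C"
  have n: "real n \<ge> 2" and C: "C > 0"
    using n_ge_2 by (simp_all add: C_def real_choose_2)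
  have "real n * G + real k * D \<le> S1"
    using sum_singleton_moves_ge unfolding S1_def G_def D_def k_def .
  then have "G + gain \<le> A1"
    using n divide_right_mono[of "real n * G + real k * D" S1 "real n"]
    by (simp add: A1_def gain_def add_divide_distrib)
  moreover have "(C - real k) * G \<le> S2"
    using sum_pair_moves_ge unfolding S2_def G_def C_def k_def .
  then have "G - loss \<le> A2"
    using C divide_right_mono[of "(C - real k) * G" S2 C]
    by (simp add: A2_def loss_def diff_divide_distrib left_diff_distrib)
  moreover have "loss \<le> 2 + gain"
    unfolding loss_def gain_def G_def D_def C_def k_def
    using n_ge_2 card_x_ge_1 card_x_le by (rule trap_loss_le_gain)
  ultimately have "2 * G \<le> A1 + A2 + 2"
    by linarith
  moreover have "measure_pmf.expectation (rls_step n F x) (trap_potential n) = (A1 + A2) / 2"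
    unfolding A1_def A2_def S1_def S2_def C_def using n_ge_2 by (rule expectation_rls_step)
  moreover have "trap_potential n x = G"
    by (simp add: trap_potential_x G_def k_def)
  ultimately show ?thesis
    by simp
qed

end

lemma trap_potential_drift:
  assumes "n \<ge> 2"
  shows "trap_potential n x
    \<le> measure_pmf.expectation (rls_step n (f_pen n trap_weights 1) x) (trap_potential n) + 1"
proof (cases "x \<subseteq> {1..n} \<and> 1 \<notin> x \<and> x \<noteq> {}")
  case True
  then interpret trap_point n x
    using assms by unfold_locales auto
  show ?thesis
    by (rule trap_potential_drift_point)
next
  case False
  then have "trap_potential n x = 0"
    by (auto simp: trap_potential_def)
  then show ?thesis
    by (simp add: integral_nonneg_AE trap_potential_nonneg)
qed

lemma sum_Pow_square_dist_card_ge: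
  fixes A :: "'a set" and c :: real
  assumes "finite A"
  shows "(\<Sum>X\<in>Pow A. (c - real (card X))\<^sup>2) \<ge> 2 ^ card A * (2 * c - real (card A))\<^sup>2 / 4"
proof -
  define g where "g X = (c - real (card X))\<^sup>2" for X :: "'a set"
  have complement: "(\<Sum>X\<in>Pow A. g (A - X)) = (\<Sum>X\<in>Pow A. g X)"
    by (rule sum.reindex_bij_betw) (rule bij_betwI[where g = "\<lambda>X. A - X"], auto)
  have pair: "(2 * c - real (card A))\<^sup>2 / 2 \<le> g X + g (A - X)" if "X \<in> Pow A" for X
  proof -
    have card_complement: "real (card (A - X)) = real (card A) - real (card X)"
      using that assms by (simp add: card_Diff_subset finite_subset of_nat_diff card_mono)
    have sq: "(u + v)\<^sup>2 / 2 \<le> u\<^sup>2 + v\<^sup>2" for u v :: real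
      using sum_squares_ge_zero[of "u - v" 0] by (simp add: power2_eq_square algebra_simps)
    show ?thesis
      unfolding g_def card_complement
      using sq[of "c - real (card X)" "c - real (card A) + real (card X)"]
      by (simp add: algebra_simps)
  qed
  have "2 ^ card A * ((2 * c - real (card A))\<^sup>2 / 2) = (\<Sum>X\<in>Pow A. (2 * c - real (card A))\<^sup>2 / 2)"
    using assms by (simp add: card_Pow)
  also have "\<dots> \<le> (\<Sum>X\<in>Pow A. g X + g (A - X))"
    by (rule sum_mono) (rule pair)
  also have "\<dots> = 2 * (\<Sum>X\<in>Pow A. g X)"
    by (simp add: sum.distrib complement)
  finally show ?thesis
    by (simp add: g_def)
qed

lemma expectation_trap_potential_uniform_ge:
  assumes "n \<ge> 4"
  shows "measure_pmf.expectation (pmf_of_set (search_space n)) (trap_potential n) \<ge> real n ^ 2 / 16"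
proof -
  define A where "A = {2..n}"
  have A: "finite A" "card A = n - 1"
    by (simp_all add: A_def)
  have "(\<Sum>x\<in>search_space n. trap_potential n x) = (\<Sum>x\<in>Pow A. trap_potential n x)"
    by (rule sum.mono_neutral_right)
      (auto simp: search_space_def A_def trap_potential_def subset_iff not_less_eq_eq)
  also have "\<dots> = (\<Sum>x\<in>Pow A. (real n - real (card x))\<^sup>2) - real n ^ 2"
  proof -
    have "trap_potential n x = (real n - real (card x))\<^sup>2 - (if x = {} then real n ^ 2 else 0)"
      if "x \<in> Pow A" for x
      using that card_mono[OF A(1), of x] A(2)
      by (auto simp: trap_potential_def A_def of_nat_diff subset_iff)
    then show ?thesis
      using A(1) by (simp add: sum_subtractf sum.delta)
  qed
  finally have "(\<Sum>x\<in>search_space n. trap_potential n x) \<ge> 2 ^ (n - 1) * (real n + 1)\<^sup>2 / 4 - real n ^ 2"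
    using sum_Pow_square_dist_card_ge[OF A(1), of "real n"] A(2) assms by (simp add: of_nat_diff)
  moreover have "2 ^ (n - 1) * (real n + 1)\<^sup>2 / 4 - real n ^ 2 \<ge> 2 ^ n * real n ^ 2 / 16"
  proof -
    define P :: real where "P = 2 ^ (n - 1)"
    have "8 \<le> P"
      using power_increasing[of 3 "n - 1" "2::real"] assms by (simp add: P_def)
    then have "8 * real n ^ 2 \<le> P * real n ^ 2"
      by (rule mult_right_mono) simp
    moreover have "P * real n ^ 2 \<le> P * (real n + 1)\<^sup>2"
      using \<open>8 \<le> P\<close> by (intro mult_left_mono power_mono) simp_all
    moreover have two_pow: "(2::real) ^ n = 2 * P"
      using assms by (simp add: P_def power_eq_if)
    ultimately show ?thesis
      unfolding P_def[symmetric] two_pow by linarith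
  qed
  ultimately have "2 ^ n * real n ^ 2 / 16 \<le> (\<Sum>x\<in>search_space n. trap_potential n x)"
    by linarith
  moreover have "measure_pmf.expectation (pmf_of_set (search_space n)) (trap_potential n)
      = (\<Sum>x\<in>search_space n. trap_potential n x) / 2 ^ n"
    unfolding search_space_def by (subst integral_pmf_of_set) (auto simp: card_Pow)
  ultimately show ?thesis
    using divide_right_mono[of "2 ^ n * real n ^ 2 / 16" _ "2 ^ n"] by simp
qed

theorem theorem4:
  "\<exists>c::real. c > 0 \<and> (\<exists>N::nat. \<forall>n\<ge>N.
     \<exists>(w::nat \<Rightarrow> real) (B::nat).
       0 < w 1 \<and> (\<forall>i\<in>{1..<n}. w i \<le> w (Suc i)) \<and> B \<in> {1..n} \<and>
       rls_expected_time n (f_pen n w B) (optimal n w B) \<ge> ennreal (c * real n ^ 2))"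
proof (intro exI[of _ "1 / 32"] conjI exI[of _ 4] allI impI)
  fix n :: nat
  assume n: "4 \<le> n"
  interpret rls_potential n "f_pen n trap_weights 1" "optimal n trap_weights 1" "trap_potential n" "n\<^sup>2"
  proof
    fix x
    show "0 \<le> trap_potential n x"
      by (fact trap_potential_nonneg)
    show "trap_potential n x \<le> real (n\<^sup>2)"
      by (fact trap_potential_le)
    show "trap_potential n x = 0" if "optimal n trap_weights 1 x"
      using n that by (intro trap_potential_optimal) simp_all
    show "trap_potential n x
        \<le> measure_pmf.expectation (rls_step n (f_pen n trap_weights 1) x) (trap_potential n) + 1"
      using n by (intro trap_potential_drift) simp
  qed
  have "ennreal (1 / 32 * real n ^ 2)
      \<le> ennreal (measure_pmf.expectation (pmf_of_set (search_space n)) (trap_potential n) / 2)"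
    using expectation_trap_potential_uniform_ge[OF n] by (intro ennreal_leI) simp
  also have "\<dots> \<le> rls_expected_time n (f_pen n trap_weights 1) (optimal n trap_weights 1)"
    by (rule expectation_initial_le_expected_time)
  finally show "\<exists>(w::nat \<Rightarrow> real) (B::nat).
      0 < w 1 \<and> (\<forall>i\<in>{1..<n}. w i \<le> w (Suc i)) \<and> B \<in> {1..n} \<and>
      rls_expected_time n (f_pen n w B) (optimal n w B) \<ge> ennreal (1 / 32 * real n ^ 2)"
    using n by (intro exI[of _ trap_weights] exI[of _ 1]) (auto simp: trap_weights_def)
qed simp

end
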